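(* Let $d$ be a defined $n$-ary operator whose $i$-th argument position is Leibniz, for some $i\in\{1,\ldots,n\}$. Let $e_1,\ldots,e_n$ be any expressions, $\mathcal{M}$ a Kripke model, $w$ a state, and $x$ a rigid variable not occurring free in any $e_j$. Then $$[\![d(e_1,\ldots,e_n)]\!]^\mathcal{M}_w=[\![d(e_1,\ldots,e_{i-1},x,e_{i+1},\ldots,e_n)]\!]^{\mathcal{M}'}_w,$$ where $\mathcal{M}'$ agrees with $\mathcal{M}$ except that its valuation of rigid variables maps $x$ to $[\![e_i]\!]^\mathcal{M}_w$.
   Context: FOML syntax. Fix disjoint, non-empty, denumerable sets $\mathcal{X}$ (rigid variables), $\mathcal{V}$ (flexible variables) and $\mathcal{O}$ (operator symbols with arities). Expressions are given by $e ::= x \mid v \mid op(e,\ldots,e) \mid e=e \mid \mathrm{FALSE} \mid e\Rightarrow e \mid \forall x:e \mid \nabla e \mid d(e,\ldots,e)$, where $d$ ranges over defined operators. Only rigid variables are bound. Operator definitions. A definition has the form $d(x_1,\ldots,x_n)\triangleq e$, where: - $d$ is a fresh symbol; - $x_1,\ldots,x_n$ are pairwise distinct rigid variables; - $e$ is an expression, possibly using flexible variables and previously defined operators, whose free rigid variables are among $x_1,\ldots,x_n$. Leibniz argument positions. These are defined inductively. - All argument positions of operators in $\mathcal{O}$, and of all connectives other than $\nabla$ (that is, $=$, $\Rightarrow$, $\forall$), are Leibniz. The argument position of $\nabla$ is not Leibniz. - For $d(x_1,\ldots,x_n)\triangleq e$, the $i$-th argument position of $d$ is Leibniz iff $x_i$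 does not occur within a non-Leibniz argument position in $e$. Semantics. A Kripke model is $\mathcal{M}=(\mathcal{I},\xi,\mathcal{W},R,\zeta,\nabla_\mathcal{M})$, where: - $\mathcal{I}$ is a first-order interpretation with distinct values $\mathsf{tt},\mathsf{ff}$ in its universe; - $\xi:\mathcal{X}\to|\mathcal{I}|$; - $\mathcal{W}$ is a non-empty set of states and $R\subseteq\mathcal{W}^2$; - $\zeta:\mathcal{V}\times\mathcal{W}\to|\mathcal{I}|$; - $\nabla_\mathcal{M}:2^{|\mathcal{I}|}\to|\mathcal{I}|$ satisfies $\nabla_\mathcal{M}(S)=\mathsf{tt}$ iff $S\subseteq\{\mathsf{tt}\}$. Values are defined as follows. - $[\![x]\!]_w=\xi(x)$ and $[\![v]\!]_w=\zeta(v,w)$. - $[\![op(\vec e)]\!]_w=\mathcal{I}(op)(\ldots)$. - $[\![e_1=e_2]\!]_w$ is $\mathsf{tt}$ iff the values are equal, and $\mathsf{ff}$ otherwise. - $[\![\mathrm{FALSE}]\!]_w=\mathsf{ff}$. - $[\![\varphi\Rightarrow\psi]\!]_w=\mathsf{tt}$ iff $[\![\varphi]\!]_w\ne\mathsf{tt}$ or $[\![\psi]\!]_w=\mathsf{tt}$, and $\mathsf{ff}$ otherwise. - $\forall$ quantifies over the rigid variable valuation only, as usual. - $[\![\nabla\varphi]\!]_w=\nabla_\mathcal{M}(\{[\![\varphi]\!]_{w'}:(w,w')\in R\})$. - For $d(x_1,\ldots,x_n)\triangleq e$, $[\![d(e_1,\ldots,e_n)]\!]^\mathcal{M}_w=[\![e[e_1/x_1,\ldots,e_n/x_n]]\!]^\mathcal{M}_w$,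 using capture-avoiding substitution. *)

theory Defs
  imports Main "HOL-Library.Countable_Set"
begin

text \<open>Rigid variables 'x, flexible variables 'v, operator symbols 'o.
  Defined operators are referred to by their index (a natural number) into a
  list of definitions; the k-th definition may only use definitions with
  smaller index.\<close>

datatype ('x, 'v, 'o) expr =
    RVar 'x
  | FVar 'v
  | Op 'o "('x, 'v, 'o) expr list"
  | Eq "('x, 'v, 'o) expr" "('x, 'v, 'o) expr"
  | FALSE
  | Imp "('x, 'v, 'o) expr" "('x, 'v, 'o) expr"
  | All 'x "('x, 'v, 'o) expr"
  | Nabla "('x, 'v, 'o) expr"
  | Def nat "('x, 'v, 'o) expr list"

text \<open>A definition d(x_1,...,x_n) == e is the pair ([x_1,...,x_n], e).\<close>
type_synonym ('x, 'v, 'o) defn = "'x list \<times> ('x, 'v, 'o) expr"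

fun fv :: "('x, 'v, 'o) expr \<Rightarrow> 'x set" where
  "fv (RVar x) = {x}"
| "fv (FVar v) = {}"
| "fv (Op p es) = (\<Union>e\<in>set es. fv e)"
| "fv (Eq a b) = fv a \<union> fv b"
| "fv FALSE = {}"
| "fv (Imp a b) = fv a \<union> fv b"
| "fv (All x a) = fv a - {x}"
| "fv (Nabla a) = fv a"
| "fv (Def k es) = (\<Union>e\<in>set es. fv e)"

fun wf_expr :: "('o \<Rightarrow> nat) \<Rightarrow> nat list \<Rightarrow> ('x, 'v, 'o) expr \<Rightarrow> bool" where
  "wf_expr ar A (RVar x) = True"
| "wf_expr ar A (FVar v) = True"
| "wf_expr ar A (Op p es) = (length es = ar p \<and> (\<forall>e\<in>set es. wf_expr ar A e))"
| "wf_expr ar A (Eq a b) = (wf_expr ar A a \<and> wf_expr ar A b)"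
| "wf_expr ar A FALSE = True"
| "wf_expr ar A (Imp a b) = (wf_expr ar A a \<and> wf_expr ar A b)"
| "wf_expr ar A (All x a) = wf_expr ar A a"
| "wf_expr ar A (Nabla a) = wf_expr ar A a"
| "wf_expr ar A (Def k es) = (k < length A \<and> length es = A ! k \<and> (\<forall>e\<in>set es. wf_expr ar A e))"

definition def_arities :: "('x, 'v, 'o) defn list \<Rightarrow> nat list" where
  "def_arities D = map (length \<circ> fst) D"

definition wf_defs :: "('o \<Rightarrow> nat) \<Rightarrow> ('x, 'v, 'o) defn list \<Rightarrow> bool" where
  "wf_defs ar D = (\<forall>k < length D.
      distinct (fst (D ! k)) \<and> fv (snd (D ! k)) \<subseteq> set (fst (D ! k)) \<and>
      wf_expr ar (def_arities (take k D)) (snd (D ! k)))"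

definition fresh_for :: "'x \<Rightarrow> 'x set \<Rightarrow> 'x" where
  "fresh_for x S = (if x \<notin> S then x else (SOME y. y \<notin> S))"

fun subst :: "('x, 'v, 'o) expr \<Rightarrow> ('x \<Rightarrow> ('x, 'v, 'o) expr) \<Rightarrow> ('x, 'v, 'o) expr" where
  "subst (RVar x) \<sigma> = \<sigma> x"
| "subst (FVar v) \<sigma> = FVar v"
| "subst (Op p es) \<sigma> = Op p (map (\<lambda>e. subst e \<sigma>) es)"
| "subst (Eq a b) \<sigma> = Eq (subst a \<sigma>) (subst b \<sigma>)"
| "subst FALSE \<sigma> = FALSE"
| "subst (Imp a b) \<sigma> = Imp (subst a \<sigma>) (subst b \<sigma>)"
| "subst (All x a) \<sigma> =
     (let y = fresh_for x (\<Union>z\<in>fv a - {x}. fv (\<sigma> z))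
      in All y (subst a (\<sigma>(x := RVar y))))"
| "subst (Nabla a) \<sigma> = Nabla (subst a \<sigma>)"
| "subst (Def k es) \<sigma> = Def k (map (\<lambda>e. subst e \<sigma>) es)"

definition mk_subst :: "'x list \<Rightarrow> ('x, 'v, 'o) expr list \<Rightarrow> 'x \<Rightarrow> ('x, 'v, 'o) expr" where
  "mk_subst xs es z = (case map_of (zip xs es) z of Some e \<Rightarrow> e | None \<Rightarrow> RVar z)"

text \<open>L ! k ! j says whether the j-th argument position of the k-th defined
  operator is Leibniz.  nonleib L y e: the rigid variable y occurs (free)
  within a non-Leibniz argument position in e.\<close>
fun nonleib :: "bool list list \<Rightarrow> 'x \<Rightarrow> ('x, 'v, 'o) expr \<Rightarrow> bool" where
  "nonleib L y (RVar z) = False"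
| "nonleib L y (FVar v) = False"
| "nonleib L y (Op p es) = (\<exists>e\<in>set es. nonleib L y e)"
| "nonleib L y (Eq a b) = (nonleib L y a \<or> nonleib L y b)"
| "nonleib L y FALSE = False"
| "nonleib L y (Imp a b) = (nonleib L y a \<or> nonleib L y b)"
| "nonleib L y (All z a) = (z \<noteq> y \<and> nonleib L y a)"
| "nonleib L y (Nabla a) = (y \<in> fv a)"
| "nonleib L y (Def k es) =
     ((\<exists>e\<in>set es. nonleib L y e) \<or>
      (\<exists>j < length es. y \<in> fv (es ! j) \<and> \<not> (k < length L \<and> j < length (L ! k) \<and> L ! k ! j)))"

definition leib_flags :: "('x, 'v, 'o) defn list \<Rightarrow> bool list list" where
  "leib_flags D = foldl (\<lambda>L d. L @ [map (\<lambda>p. \<not> nonleib L p (snd d)) (fst d)]) [] D"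

definition leibniz :: "('x, 'v, 'o) defn list \<Rightarrow> nat \<Rightarrow> nat \<Rightarrow> bool" where
  "leibniz D k i = (k < length D \<and> i < length (fst (D ! k)) \<and> leib_flags D ! k ! i)"

record ('o, 'x, 'v, 'w, 'u) kmodel =
  interp :: "'o \<Rightarrow> 'u list \<Rightarrow> 'u"
  tt :: 'u
  ff :: 'u
  xi :: "'x \<Rightarrow> 'u"
  states :: "'w set"
  acc :: "('w \<times> 'w) set"
  zeta :: "'v \<Rightarrow> 'w \<Rightarrow> 'u"
  nab :: "'u set \<Rightarrow> 'u"

definition kripke_model :: "('o, 'x, 'v, 'w, 'u) kmodel \<Rightarrow> bool" where
  "kripke_model M = (tt M \<noteq> ff M \<and> states M \<noteq> {} \<and> acc M \<subseteq> states M \<times> states M \<and>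
     (\<forall>S. nab M S = tt M \<longleftrightarrow> S \<subseteq> {tt M}))"

text \<open>Values of expressions without defined operators.\<close>
fun eval :: "('o, 'x, 'v, 'w, 'u) kmodel \<Rightarrow> 'w \<Rightarrow> ('x, 'v, 'o) expr \<Rightarrow> 'u" where
  "eval M w (RVar x) = xi M x"
| "eval M w (FVar v) = zeta M v w"
| "eval M w (Op p es) = interp M p (map (eval M w) es)"
| "eval M w (Eq a b) = (if eval M w a = eval M w b then tt M else ff M)"
| "eval M w FALSE = ff M"
| "eval M w (Imp a b) = (if eval M w a \<noteq> tt M \<or> eval M w b = tt M then tt M else ff M)"
| "eval M w (All x a) =
     (if (\<forall>u. eval (M\<lparr>xi := (xi M)(x := u)\<rparr>) w a = tt M) then tt M else ff M)"
| "eval M w (Nabla a) = nab M {eval M w' a | w'. (w, w') \<in> acc M}"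
| "eval M w (Def k es) = undefined"

text \<open>Expansion of defined operators: d(e_1,...,e_n) is replaced by
  e[e_1/x_1,...,e_n/x_n] (with everything expanded).  U is the list of
  already expanded definitions.\<close>
fun expand :: "('x, 'v, 'o) defn list \<Rightarrow> ('x, 'v, 'o) expr \<Rightarrow> ('x, 'v, 'o) expr" where
  "expand U (RVar x) = RVar x"
| "expand U (FVar v) = FVar v"
| "expand U (Op p es) = Op p (map (expand U) es)"
| "expand U (Eq a b) = Eq (expand U a) (expand U b)"
| "expand U FALSE = FALSE"
| "expand U (Imp a b) = Imp (expand U a) (expand U b)"
| "expand U (All x a) = All x (expand U a)"
| "expand U (Nabla a) = Nabla (expand U a)"
| "expand U (Def k es) =
     (if k < length U then subst (snd (U ! k)) (mk_subst (fst (U ! k)) (map (expand U) es))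
      else Def k (map (expand U) es))"

definition unfold_defs :: "('x, 'v, 'o) defn list \<Rightarrow> ('x, 'v, 'o) defn list" where
  "unfold_defs D = foldl (\<lambda>U d. U @ [(fst d, expand U (snd d))]) [] D"

definition sem :: "('o, 'x, 'v, 'w, 'u) kmodel \<Rightarrow> ('x, 'v, 'o) defn list \<Rightarrow> 'w \<Rightarrow> ('x, 'v, 'o) expr \<Rightarrow> 'u" where
  "sem M D w e = eval M w (expand (unfold_defs D) e)"

end

theory Submission
  imports Defs
begin

text \<open>
  Treat rigid variables as state-dependent, like flexible ones.  Then the value of
  d(e_1,...,e_n) at w is that of the body of d under the valuation giving the j-th
  parameter, at each state w', the value of e_j at w'.  Call a set Y of variables
  Leibniz in an expression if its value at w depends on Y only through the values at w.
  By induction along the definitions, the parameters flagged as Leibniz form such a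
  set for the expanded body, since only \<open>\<nabla>\<close> lets a variable be read at another
  state.  Replacing e_i by the fresh x, valued as e_i at w, changes the valuation of
  the i-th parameter only at states other than w.
\<close>

fun eval_flex :: "('o, 'x, 'v, 'w, 'u) kmodel \<Rightarrow> ('w \<Rightarrow> 'x \<Rightarrow> 'u) \<Rightarrow> 'w \<Rightarrow> ('x, 'v, 'o) expr \<Rightarrow> 'u" where
  "eval_flex M \<rho> w (RVar x) = \<rho> w x"
| "eval_flex M \<rho> w (FVar v) = zeta M v w"
| "eval_flex M \<rho> w (Op p es) = interp M p (map (eval_flex M \<rho> w) es)"
| "eval_flex M \<rho> w (Eq a b) = (if eval_flex M \<rho> w a = eval_flex M \<rho> w b then tt M else ff M)"
| "eval_flex M \<rho> w FALSE = ff M"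
| "eval_flex M \<rho> w (Imp a b) =
     (if eval_flex M \<rho> w a \<noteq> tt M \<or> eval_flex M \<rho> w b = tt M then tt M else ff M)"
| "eval_flex M \<rho> w (All x a) =
     (if \<forall>u. eval_flex M (\<lambda>w'. (\<rho> w')(x := u)) w a = tt M then tt M else ff M)"
| "eval_flex M \<rho> w (Nabla a) = nab M {eval_flex M \<rho> w' a | w'. (w, w') \<in> acc M}"
| "eval_flex M \<rho> w (Def k es) = undefined"

lemma eval_flex_update_xi: "eval_flex (M\<lparr>xi := f\<rparr>) \<rho> w e = eval_flex M \<rho> w e"
  by (induction e arbitrary: \<rho> w) (simp_all cong: map_cong)

lemma eval_eq_eval_flex: "eval M w e = eval_flex M (\<lambda>_. xi M) w e"
  by (induction e arbitrary: M w) (simp_all add: eval_flex_update_xi fun_upd_def cong: map_cong)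

lemma eval_flex_cong:
  "(\<And>w' z. z \<in> fv e \<Longrightarrow> \<rho>1 w' z = \<rho>2 w' z) \<Longrightarrow> eval_flex M \<rho>1 w e = eval_flex M \<rho>2 w e"
proof (induction e arbitrary: \<rho>1 \<rho>2 w)
  case (Op p es)
  have "map (eval_flex M \<rho>1 w) es = map (eval_flex M \<rho>2 w) es"
  proof (rule map_cong[OF refl])
    fix e assume "e \<in> set es"
    then show "eval_flex M \<rho>1 w e = eval_flex M \<rho>2 w e"
      by (intro Op.IH) (use Op.prems in auto)
  qed
  then show ?case by (simp only: eval_flex.simps)
next
  case (All x a)
  have "eval_flex M (\<lambda>w'. (\<rho>1 w')(x := u)) w a = eval_flex M (\<lambda>w'. (\<rho>2 w')(x := u)) w a" for u
    by (rule All.IH) (use All.prems in auto)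
  then show ?case by (simp only: eval_flex.simps)
next
  case (Nabla a)
  have "eval_flex M \<rho>1 w' a = eval_flex M \<rho>2 w' a" for w'
    by (rule Nabla.IH) (use Nabla.prems in auto)
  then show ?case by (simp only: eval_flex.simps)
next
  case (Eq a b)
  then show ?case by (metis UnCI eval_flex.simps(4) fv.simps(4))
next
  case (Imp a b)
  then show ?case by (metis UnCI eval_flex.simps(6) fv.simps(6))
qed simp_all

lemma finite_fv: "finite (fv e)"
  by (induction e) auto

lemma fresh_for_notin: "infinite (UNIV :: 'x set) \<Longrightarrow> finite S \<Longrightarrow> fresh_for (x :: 'x) S \<notin> S"
  unfolding fresh_for_def by (metis (mono_tags, lifting) ex_new_if_finite someI_ex)

lemma fv_subst: "fv (subst e \<sigma>) \<subseteq> (\<Union>z\<in>fv e. fv (\<sigma> z))"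
proof (induction e arbitrary: \<sigma>)
  case (All x a)
  define y where "y = fresh_for x (\<Union>z\<in>fv a - {x}. fv (\<sigma> z))"
  have "fv (subst a (\<sigma>(x := RVar y))) \<subseteq> (\<Union>z\<in>fv a. fv ((\<sigma>(x := RVar y)) z))"
    by (rule All.IH)
  then show ?case by (auto simp: Let_def y_def[symmetric] split: if_splits)
qed fastforce+

lemma eval_flex_subst:
  assumes "infinite (UNIV :: 'x set)"
  shows "eval_flex M \<rho> w (subst (e :: ('x, 'v, 'o) expr) \<sigma>) =
         eval_flex M (\<lambda>w' z. eval_flex M \<rho> w' (\<sigma> z)) w e"
proof (induction e arbitrary: \<rho> \<sigma> w)
  case (All x a)
  define y where "y = fresh_for x (\<Union>z\<in>fv a - {x}. fv (\<sigma> z))"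
  have y: "y \<notin> fv (\<sigma> z)" if "z \<in> fv a" "z \<noteq> x" for z
    using fresh_for_notin[OF assms, of "\<Union>z\<in>fv a - {x}. fv (\<sigma> z)" x] that
    by (auto simp: finite_fv y_def)
  have "eval_flex M (\<lambda>w'. (\<rho> w')(y := u)) w (subst a (\<sigma>(x := RVar y))) =
        eval_flex M (\<lambda>w'. (\<lambda>z. eval_flex M \<rho> w' (\<sigma> z))(x := u)) w a" for u
    unfolding All.IH
  proof (rule eval_flex_cong)
    fix w' z assume "z \<in> fv a"
    have "eval_flex M (\<lambda>w'. (\<rho> w')(y := u)) w' (\<sigma> z) = eval_flex M \<rho> w' (\<sigma> z)" if "z \<noteq> x"
      by (rule eval_flex_cong) (use y[OF \<open>z \<in> fv a\<close> that] in auto)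
    then show "eval_flex M (\<lambda>w'. (\<rho> w')(y := u)) w' ((\<sigma>(x := RVar y)) z) =
               ((\<lambda>z. eval_flex M \<rho> w' (\<sigma> z))(x := u)) z"
      by simp
  qed
  then show ?case by (simp add: Let_def y_def[symmetric])
qed (simp_all cong: map_cong)

lemma mk_subst_Cons: "mk_subst (a # xs) (b # A) z = (if a = z then b else mk_subst xs A z)"
  by (simp add: mk_subst_def)

lemma mk_subst_nth:
  assumes "z \<in> set xs"
  shows "\<exists>j<length xs. xs ! j = z \<and>
           (\<forall>A :: ('x, 'v, 'o) expr list. length A = length xs \<longrightarrow> mk_subst xs A z = A ! j)"
  using assms
proof (induction xs)
  case (Cons a xs)
  show ?case
  proof (cases "a = z")
    case True
    show ?thesis
    proof (intro exI[of _ 0] conjI allI impI)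
      fix A :: "('x, 'v, 'o) expr list" assume "length A = length (a # xs)"
      then obtain b B where "A = b # B" by (cases A) auto
      with True show "mk_subst (a # xs) A z = A ! 0" by (simp add: mk_subst_Cons)
    qed (use True in simp_all)
  next
    case False
    with Cons.prems have "z \<in> set xs" by simp
    from Cons.IH[OF this] obtain j where j: "j < length xs" "xs ! j = z"
        "\<forall>A :: ('x, 'v, 'o) expr list. length A = length xs \<longrightarrow> mk_subst xs A z = A ! j"
      by blast
    show ?thesis
    proof (intro exI[of _ "Suc j"] conjI allI impI)
      fix A :: "('x, 'v, 'o) expr list" assume "length A = length (a # xs)"
      then obtain b B where "A = b # B" "length B = length xs" by (cases A) auto
      with False j show "mk_subst (a # xs) A z = A ! Suc j" by (simp add: mk_subst_Cons)
    qed (use j in simp_all)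
  qed
qed simp

definition closed_defs :: "('x, 'v, 'o) defn list \<Rightarrow> bool" where
  "closed_defs U = (\<forall>(xs, b)\<in>set U. fv b \<subseteq> set xs)"

lemma closed_defs_nth: "closed_defs U \<Longrightarrow> k < length U \<Longrightarrow> fv (snd (U ! k)) \<subseteq> set (fst (U ! k))"
  using nth_mem unfolding closed_defs_def by fastforce

lemma fv_expand:
  assumes "wf_expr ar (def_arities U) e" and "closed_defs U"
  shows "fv (expand U e) \<subseteq> fv e"
  using assms(1)
proof (induction e)
  case (Def k es)
  show ?case
  proof (cases "k < length U")
    case True
    let ?xs = "fst (U ! k)" and ?A = "map (expand U) es"
    have fv_body: "fv (snd (U ! k)) \<subseteq> set ?xs"
      using assms(2) True by (rule closed_defs_nth)
    have "fv (mk_subst ?xs ?A z) \<subseteq> fv (Def k es)" if z: "z \<in> set ?xs" for z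
    proof -
      have len: "length ?A = length ?xs"
        using Def.prems True by (simp add: def_arities_def)
      obtain j where j: "j < length ?xs" "mk_subst ?xs ?A z = ?A ! j"
        using mk_subst_nth[OF z] len by blast
      with len have "j < length es" "es ! j \<in> set es" by simp_all
      with j Def show ?thesis by fastforce
    qed
    then have "(\<Union>z\<in>fv (snd (U ! k)). fv (mk_subst ?xs ?A z)) \<subseteq> fv (Def k es)"
      using fv_body by blast
    with fv_subst show ?thesis using True by fastforce
  qed (use Def in fastforce)
qed fastforce+

lemma eval_flex_expand_cong:
  assumes "closed_defs U" and "wf_expr ar (def_arities U) e"
    and "\<And>w' z. z \<in> fv e \<Longrightarrow> \<rho>1 w' z = \<rho>2 w' z"
  shows "eval_flex M \<rho>1 w (expand U e) = eval_flex M \<rho>2 w (expand U e)"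
  by (rule eval_flex_cong) (use fv_expand[OF assms(2,1)] assms(3) in auto)

text \<open>Semantic version of: the variables of Y occur in B only at Leibniz positions.\<close>

definition sem_leibniz :: "('o, 'x, 'v, 'w, 'u) kmodel \<Rightarrow> ('x, 'v, 'o) expr \<Rightarrow> 'x set \<Rightarrow> bool" where
  "sem_leibniz M B Y = (\<forall>\<rho>1 \<rho>2 w. (\<forall>z\<in>fv B. \<rho>1 w z = \<rho>2 w z) \<longrightarrow>
      (\<forall>w'. \<forall>z\<in>fv B - Y. \<rho>1 w' z = \<rho>2 w' z) \<longrightarrow> eval_flex M \<rho>1 w B = eval_flex M \<rho>2 w B)"

lemma sem_leibniz_antimono: "Y \<subseteq> Y' \<Longrightarrow> sem_leibniz M B Y' \<Longrightarrow> sem_leibniz M B Y"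
  unfolding sem_leibniz_def by blast

lemma sem_leibnizI_superset:
  fixes M :: "('o, 'x, 'v, 'w, 'u) kmodel" and B :: "('x, 'v, 'o) expr"
  assumes "fv B \<subseteq> V"
    and "\<And>\<rho>1 \<rho>2 w. \<forall>z\<in>V. \<rho>1 w z = \<rho>2 w z \<Longrightarrow> \<forall>w'. \<forall>z\<in>V - Y. \<rho>1 w' z = \<rho>2 w' z \<Longrightarrow>
           eval_flex M \<rho>1 w B = eval_flex M \<rho>2 w B"
  shows "sem_leibniz M B Y"
  unfolding sem_leibniz_def
proof (intro allI impI)
  fix \<rho>1 \<rho>2 :: "'w \<Rightarrow> 'x \<Rightarrow> 'u" and w :: 'w
  assume at_w: "\<forall>z\<in>fv B. \<rho>1 w z = \<rho>2 w z" and off_Y: "\<forall>w'. \<forall>z\<in>fv B - Y. \<rho>1 w' z = \<rho>2 w' z"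
  define \<rho>3 where "\<rho>3 = (\<lambda>w' z. if z \<in> fv B then \<rho>2 w' z else \<rho>1 w' z)"
  have "eval_flex M \<rho>1 w B = eval_flex M \<rho>3 w B"
    by (rule assms(2)) (use at_w off_Y in \<open>auto simp: \<rho>3_def\<close>)
  also have "\<dots> = eval_flex M \<rho>2 w B"
    by (rule eval_flex_cong) (simp add: \<rho>3_def)
  finally show "eval_flex M \<rho>1 w B = eval_flex M \<rho>2 w B" .
qed

lemma eval_flex_subst_sem_leibniz:
  fixes B :: "('x, 'v, 'o) expr"
  assumes inf: "infinite (UNIV :: 'x set)"
    and leib: "sem_leibniz M B {xs ! j | j. j < length xs \<and> P j}"
    and closed: "fv B \<subseteq> set xs"
    and len: "length A1 = length xs" "length A2 = length xs"
    and at_w: "\<And>j. j < length xs \<Longrightarrow> eval_flex M \<rho>1 w (A1 ! j) = eval_flex M \<rho>2 w (A2 ! j)"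
    and not_P: "\<And>j w'. j < length xs \<Longrightarrow> \<not> P j \<Longrightarrow>
                  eval_flex M \<rho>1 w' (A1 ! j) = eval_flex M \<rho>2 w' (A2 ! j)"
  shows "eval_flex M \<rho>1 w (subst B (mk_subst xs A1)) = eval_flex M \<rho>2 w (subst B (mk_subst xs A2))"
proof -
  define \<rho>1' where "\<rho>1' = (\<lambda>w' z. eval_flex M \<rho>1 w' (mk_subst xs A1 z))"
  define \<rho>2' where "\<rho>2' = (\<lambda>w' z. eval_flex M \<rho>2 w' (mk_subst xs A2 z))"
  have arg: "\<exists>j<length xs. xs ! j = z \<and> \<rho>1' w' z = eval_flex M \<rho>1 w' (A1 ! j) \<and>
               \<rho>2' w' z = eval_flex M \<rho>2 w' (A2 ! j)" if "z \<in> fv B" for z w'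
    using mk_subst_nth[of z xs] that closed len by (force simp: \<rho>1'_def \<rho>2'_def)
  have "eval_flex M \<rho>1' w B = eval_flex M \<rho>2' w B"
    using leib unfolding sem_leibniz_def
  proof (elim allE impE)
    show "\<forall>z\<in>fv B. \<rho>1' w z = \<rho>2' w z"
    proof
      fix z assume "z \<in> fv B"
      with arg obtain j where "j < length xs" "\<rho>1' w z = eval_flex M \<rho>1 w (A1 ! j)"
          "\<rho>2' w z = eval_flex M \<rho>2 w (A2 ! j)"
        by blast
      with at_w show "\<rho>1' w z = \<rho>2' w z" by simp
    qed
    show "\<forall>w'. \<forall>z\<in>fv B - {xs ! j | j. j < length xs \<and> P j}. \<rho>1' w' z = \<rho>2' w' z"
    proof (intro allI ballI)
      fix w' z assume z: "z \<in> fv B - {xs ! j | j. j < length xs \<and> P j}"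
      then obtain j where "j < length xs" "xs ! j = z" "\<rho>1' w' z = eval_flex M \<rho>1 w' (A1 ! j)"
          "\<rho>2' w' z = eval_flex M \<rho>2 w' (A2 ! j)"
        using arg by blast
      with z not_P show "\<rho>1' w' z = \<rho>2' w' z" by auto
    qed
  qed
  moreover have "eval_flex M \<rho>1 w (subst B (mk_subst xs A1)) = eval_flex M \<rho>1' w B"
    unfolding \<rho>1'_def by (rule eval_flex_subst[OF inf])
  moreover have "eval_flex M \<rho>2 w (subst B (mk_subst xs A2)) = eval_flex M \<rho>2' w B"
    unfolding \<rho>2'_def by (rule eval_flex_subst[OF inf])
  ultimately show ?thesis by simp
qed

definition leibniz_params :: "'x list \<Rightarrow> bool list \<Rightarrow> 'x set" where
  "leibniz_params xs fl = {xs ! j | j. j < length xs \<and> j < length fl \<and> fl ! j}"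

definition sound_leibniz_flags ::
  "('o, 'x, 'v, 'w, 'u) kmodel \<Rightarrow> ('x, 'v, 'o) defn list \<Rightarrow> bool list list \<Rightarrow> bool" where
  "sound_leibniz_flags M U L = list_all2 (\<lambda>(xs, b) fl. sem_leibniz M b (leibniz_params xs fl)) U L"

lemma eval_flex_expand_leibniz:
  fixes U :: "('x, 'v, 'o) defn list" and M :: "('o, 'x, 'v, 'w, 'u) kmodel"
  assumes sound: "sound_leibniz_flags M U L" and closed: "closed_defs U"
    and inf: "infinite (UNIV :: 'x set)"
  shows "wf_expr ar (def_arities U) e \<Longrightarrow> \<forall>y\<in>Y. \<not> nonleib L y e \<Longrightarrow>
    \<forall>z\<in>fv e. \<rho>1 w z = \<rho>2 w z \<Longrightarrow> \<forall>w'. \<forall>z\<in>fv e - Y. \<rho>1 w' z = \<rho>2 w' z \<Longrightarrow>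
    eval_flex M \<rho>1 w (expand U e) = eval_flex M \<rho>2 w (expand U e)"
proof (induction e arbitrary: Y \<rho>1 \<rho>2 w)
  case (Op p es)
  have "map (eval_flex M \<rho>1 w \<circ> expand U) es = map (eval_flex M \<rho>2 w \<circ> expand U) es"
  proof (rule map_cong[OF refl])
    fix e assume e: "e \<in> set es"
    show "(eval_flex M \<rho>1 w \<circ> expand U) e = (eval_flex M \<rho>2 w \<circ> expand U) e"
      unfolding o_def by (rule Op.IH[OF e, of Y]) (use Op.prems e in fastforce)+
  qed
  then show ?case by (simp only: eval_flex.simps expand.simps map_map)
next
  case (Eq a b)
  have "eval_flex M \<rho>1 w (expand U a) = eval_flex M \<rho>2 w (expand U a)"
    by (rule Eq.IH(1)[of Y]) (use Eq.prems in auto)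
  moreover have "eval_flex M \<rho>1 w (expand U b) = eval_flex M \<rho>2 w (expand U b)"
    by (rule Eq.IH(2)[of Y]) (use Eq.prems in auto)
  ultimately show ?case by simp
next
  case (Imp a b)
  have "eval_flex M \<rho>1 w (expand U a) = eval_flex M \<rho>2 w (expand U a)"
    by (rule Imp.IH(1)[of Y]) (use Imp.prems in auto)
  moreover have "eval_flex M \<rho>1 w (expand U b) = eval_flex M \<rho>2 w (expand U b)"
    by (rule Imp.IH(2)[of Y]) (use Imp.prems in auto)
  ultimately show ?case by simp
next
  case (All x a)
  have "eval_flex M (\<lambda>w'. (\<rho>1 w')(x := u)) w (expand U a) =
        eval_flex M (\<lambda>w'. (\<rho>2 w')(x := u)) w (expand U a)" for u
    by (rule All.IH[of "Y - {x}"]) (use All.prems in auto)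
  then show ?case by simp
next
  case (Nabla a)
  \<comment> \<open>a variable of Y does not occur below the box at all\<close>
  have "eval_flex M \<rho>1 w' (expand U a) = eval_flex M \<rho>2 w' (expand U a)" for w'
    by (rule eval_flex_expand_cong[OF closed]) (use Nabla.prems in auto)
  then show ?case by simp
next
  case (Def k es)
  show ?case
  proof (cases "k < length U")
    case True
    let ?xs = "fst (U ! k)" and ?A = "map (expand U) es"
    define P where "P j \<longleftrightarrow> (\<exists>y\<in>Y. y \<in> fv (es ! j))" for j
    have len: "length ?A = length ?xs"
      using Def.prems True by (simp add: def_arities_def)
    have "{?xs ! j | j. j < length ?xs \<and> P j} \<subseteq> leibniz_params ?xs (L ! k)"
      using Def.prems(2) len by (fastforce simp: P_def leibniz_params_def)
    moreover have "sem_leibniz M (snd (U ! k)) (leibniz_params ?xs (L ! k))"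
      using list_all2_nthD[OF sound[unfolded sound_leibniz_flags_def] True]
      by (simp add: case_prod_beta)
    ultimately have leib: "sem_leibniz M (snd (U ! k)) {?xs ! j | j. j < length ?xs \<and> P j}"
      by (rule sem_leibniz_antimono)
    from closed True have "fv (snd (U ! k)) \<subseteq> set ?xs"
      by (rule closed_defs_nth)
    then have "eval_flex M \<rho>1 w (subst (snd (U ! k)) (mk_subst ?xs ?A)) =
               eval_flex M \<rho>2 w (subst (snd (U ! k)) (mk_subst ?xs ?A))"
    proof (rule eval_flex_subst_sem_leibniz[OF inf leib _ len len])
      fix j assume j: "j < length ?xs"
      with len have e: "es ! j \<in> set es" by simp
      have "eval_flex M \<rho>1 w (expand U (es ! j)) = eval_flex M \<rho>2 w (expand U (es ! j))"
        by (rule Def.IH[OF e, of Y]) (use Def.prems e in fastforce)+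
      with j len show "eval_flex M \<rho>1 w (?A ! j) = eval_flex M \<rho>2 w (?A ! j)" by simp
      have "eval_flex M \<rho>1 w' (expand U (es ! j)) = eval_flex M \<rho>2 w' (expand U (es ! j))"
        if "\<not> P j" for w'
        by (rule eval_flex_expand_cong[OF closed]) (use Def.prems e that in \<open>fastforce simp: P_def\<close>)+
      with j len show "eval_flex M \<rho>1 w' (?A ! j) = eval_flex M \<rho>2 w' (?A ! j)" if "\<not> P j" for w'
        using that by simp
    qed
    with True show ?thesis by simp
  qed simp
qed simp_all

lemma unfold_defs_snoc:
  "unfold_defs (D @ [d]) = unfold_defs D @ [(fst d, expand (unfold_defs D) (snd d))]"
  unfolding unfold_defs_def by simp

lemma leib_flags_snoc:
  "leib_flags (D @ [d]) = leib_flags D @ [map (\<lambda>p. \<not> nonleib (leib_flags D) p (snd d)) (fst d)]"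
  unfolding leib_flags_def by simp

lemma map_fst_unfold_defs: "map fst (unfold_defs D) = map fst D"
  by (induction D rule: rev_induct) (simp_all add: unfold_defs_snoc, simp add: unfold_defs_def)

lemma def_arities_unfold_defs: "def_arities (unfold_defs D) = def_arities D"
  by (metis def_arities_def map_fst_unfold_defs map_map)

lemma map_length_leib_flags: "map length (leib_flags D) = def_arities D"
  by (induction D rule: rev_induct)
    (simp_all add: leib_flags_snoc def_arities_def, simp add: leib_flags_def)

lemma wf_defs_snoc:
  "wf_defs ar (D @ [d]) \<longleftrightarrow> wf_defs ar D \<and>
     distinct (fst d) \<and> fv (snd d) \<subseteq> set (fst d) \<and> wf_expr ar (def_arities D) (snd d)"
  unfolding wf_defs_def by (auto simp: less_Suc_eq nth_append)

lemma closed_unfold_defs: "wf_defs ar D \<Longrightarrow> closed_defs (unfold_defs D)"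
proof (induction D rule: rev_induct)
  case (snoc d D)
  with fv_expand[of ar "unfold_defs D" "snd d"] show ?case
    by (fastforce simp: wf_defs_snoc unfold_defs_snoc closed_defs_def def_arities_unfold_defs)
qed (simp add: unfold_defs_def closed_defs_def)

lemma sound_leibniz_flags_unfold_defs:
  fixes D :: "('x, 'v, 'o) defn list" and M :: "('o, 'x, 'v, 'w, 'u) kmodel"
  assumes "infinite (UNIV :: 'x set)"
  shows "wf_defs ar D \<Longrightarrow> sound_leibniz_flags M (unfold_defs D) (leib_flags D)"
proof (induction D rule: rev_induct)
  case (snoc d D)
  let ?U = "unfold_defs D" and ?L = "leib_flags D"
  let ?fl = "map (\<lambda>p. \<not> nonleib ?L p (snd d)) (fst d)"
  have wf: "wf_defs ar D" "wf_expr ar (def_arities ?U) (snd d)"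
    using snoc.prems by (simp_all add: wf_defs_snoc def_arities_unfold_defs)
  have "sem_leibniz M (expand ?U (snd d)) (leibniz_params (fst d) ?fl)"
  proof (rule sem_leibnizI_superset[OF fv_expand[OF wf(2) closed_unfold_defs[OF wf(1)]]])
    fix \<rho>1 \<rho>2 :: "'w \<Rightarrow> 'x \<Rightarrow> 'u" and w
    assume "\<forall>z\<in>fv (snd d). \<rho>1 w z = \<rho>2 w z"
      and "\<forall>w'. \<forall>z\<in>fv (snd d) - leibniz_params (fst d) ?fl. \<rho>1 w' z = \<rho>2 w' z"
    then show "eval_flex M \<rho>1 w (expand ?U (snd d)) = eval_flex M \<rho>2 w (expand ?U (snd d))"
      by (intro eval_flex_expand_leibniz[OF snoc.IH[OF wf(1)] closed_unfold_defs[OF wf(1)] assms wf(2)])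
        (auto simp: leibniz_params_def)
  qed
  then show ?case
    using snoc.IH[OF wf(1)]
    by (simp add: sound_leibniz_flags_def unfold_defs_snoc leib_flags_snoc list_all2_appendI)
qed (simp add: sound_leibniz_flags_def unfold_defs_def leib_flags_def)

lemma length_unfold_defs: "length (unfold_defs D) = length D"
  by (metis length_map map_fst_unfold_defs)

lemma fst_unfold_defs_nth: "k < length D \<Longrightarrow> fst (unfold_defs D ! k) = fst (D ! k)"
  by (metis length_unfold_defs map_fst_unfold_defs nth_map)

lemma sem_Def:
  assumes "k < length D"
  shows "sem M D w (Def k es) = eval_flex M (\<lambda>_. xi M) w
    (subst (snd (unfold_defs D ! k)) (mk_subst (fst (D ! k)) (map (expand (unfold_defs D)) es)))"
  using assms by (simp add: sem_def eval_eq_eval_flex length_unfold_defs fst_unfold_defs_nth)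

lemma sem_leibniz_param:
  fixes D :: "('x, 'v, 'o) defn list" and M :: "('o, 'x, 'v, 'w, 'u) kmodel"
  assumes "infinite (UNIV :: 'x set)" and "wf_defs ar D" and "leibniz D k i"
  shows "sem_leibniz M (snd (unfold_defs D ! k)) {fst (D ! k) ! i}"
proof (rule sem_leibniz_antimono)
  have k: "k < length D" and i: "i < length (fst (D ! k))" and flag: "leib_flags D ! k ! i"
    using assms(3) unfolding leibniz_def by auto
  have "length (leib_flags D ! k) = length (fst (D ! k))"
    using k map_length_leib_flags[of D]
    by (metis comp_apply def_arities_def length_map nth_map)
  with i flag show "{fst (D ! k) ! i} \<subseteq> leibniz_params (fst (unfold_defs D ! k)) (leib_flags D ! k)"
    using k by (auto simp: leibniz_params_def fst_unfold_defs_nth)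
  show "sem_leibniz M (snd (unfold_defs D ! k)) (leibniz_params (fst (unfold_defs D ! k)) (leib_flags D ! k))"
    using list_all2_nthD[OF sound_leibniz_flags_unfold_defs[OF assms(1,2), of M, unfolded sound_leibniz_flags_def]] k
    by (simp add: case_prod_beta length_unfold_defs)
qed

theorem lemma2:
  fixes ar :: "'o \<Rightarrow> nat"
    and D :: "('x, 'v, 'o) defn list"
    and k i :: nat
    and es :: "('x, 'v, 'o) expr list"
    and M :: "('o, 'x, 'v, 'w, 'u) kmodel"
    and w :: 'w
    and x :: 'x
  assumes "infinite (UNIV :: 'x set)" and "countable (UNIV :: 'x set)"
    and "infinite (UNIV :: 'v set)" and "countable (UNIV :: 'v set)"
    and "infinite (UNIV :: 'o set)" and "countable (UNIV :: 'o set)"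
    and "wf_defs ar D"
    and "k < length D"
    and "leibniz D k i"
    and "length es = length (fst (D ! k))"
    and "\<forall>e\<in>set es. wf_expr ar (def_arities D) e"
    and "kripke_model M"
    and "w \<in> states M"
    and "\<forall>e\<in>set es. x \<notin> fv e"
  shows "sem M D w (Def k es) =
         sem (M\<lparr>xi := (xi M)(x := sem M D w (es ! i))\<rparr>) D w (Def k (es[i := RVar x]))"
proof -
  let ?U = "unfold_defs D" and ?xs = "fst (D ! k)"
  let ?A = "map (expand ?U) es" and ?A' = "map (expand ?U) (es[i := RVar x])"
  define M' where "M' = M\<lparr>xi := (xi M)(x := sem M D w (es ! i))\<rparr>"
  have xi_M': "xi M' = (xi M)(x := sem M D w (es ! i))" by (simp add: M'_def)
  have i: "i < length ?xs"
    using assms(9) unfolding leibniz_def by simp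
  have closed: "fv (snd (?U ! k)) \<subseteq> set ?xs"
    using closed_defs_nth[OF closed_unfold_defs[OF assms(7)], of k] assms(8)
    by (simp add: length_unfold_defs fst_unfold_defs_nth)
  have other_args: "eval_flex M (\<lambda>_. xi M) w' (?A ! j) = eval_flex M (\<lambda>_. xi M') w' (?A' ! j)"
    if "j < length ?xs" "j \<noteq> i" for j w'
  proof -
    have j: "j < length es" using that assms(10) by simp
    then have "es ! j \<in> set es" by simp
    with assms(11,14) have "eval_flex M (\<lambda>_. xi M) w' (expand ?U (es ! j)) =
                             eval_flex M (\<lambda>_. xi M') w' (expand ?U (es ! j))"
      unfolding xi_M' using closed_unfold_defs[OF assms(7)]
      by (intro eval_flex_expand_cong) (auto simp: def_arities_unfold_defs)
    with j that(2) show ?thesis by simp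
  qed
  have "sem M D w (Def k es) = eval_flex M (\<lambda>_. xi M) w (subst (snd (?U ! k)) (mk_subst ?xs ?A))"
    using assms(8) by (rule sem_Def)
  also have "\<dots> = eval_flex M (\<lambda>_. xi M') w (subst (snd (?U ! k)) (mk_subst ?xs ?A'))"
  proof (rule eval_flex_subst_sem_leibniz[OF assms(1) _ closed, where P = "\<lambda>j. j = i"])
    have "{?xs ! j | j. j < length ?xs \<and> j = i} = {?xs ! i}" using i by auto
    then show "sem_leibniz M (snd (?U ! k)) {?xs ! j | j. j < length ?xs \<and> j = i}"
      using sem_leibniz_param[OF assms(1,7,9)] by simp
    fix j assume j: "j < length ?xs"
    \<comment> \<open>at the current state, the argument e_i and the variable x have the same value\<close>
    have "eval_flex M (\<lambda>_. xi M) w (?A ! i) = eval_flex M (\<lambda>_. xi M') w (?A' ! i)"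
      using i assms(10) by (simp add: M'_def sem_def eval_eq_eval_flex)
    with j other_args show "eval_flex M (\<lambda>_. xi M) w (?A ! j) = eval_flex M (\<lambda>_. xi M') w (?A' ! j)"
      by (cases "j = i") auto
  qed (use assms(10) other_args in simp_all)
  also have "\<dots> = sem M' D w (Def k (es[i := RVar x]))"
    using assms(8) by (simp add: sem_Def M'_def eval_flex_update_xi)
  finally show ?thesis unfolding M'_def .
qed

end
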